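(* Let $\varphi\colon \mathbb{R}^n\to\overline{\mathbb{R}}$ be a proper nearly convex function and $\varepsilon\geq 0$. Then for every $\bar x\in \mathrm{ri}(\mathrm{dom}\, \varphi)$, the set $\partial_\varepsilon \varphi(\bar x)$ is nonempty, closed and convex. Furthermore, $$\partial \varphi(\bar x)=\bigcap_{\varepsilon>0} \partial_\varepsilon \varphi(\bar x).$$
   Context: $\overline{\mathbb{R}}=[-\infty,\infty]$; $\varphi$ is proper if $\mathrm{dom}\,\varphi=\{x\mid\varphi(x)<\infty\}\ne\emptyset$ and $\varphi(x)>-\infty$ for all $x$. A set $D$ is nearly convex if there is a convex set $E$ with $E\subset D\subset\overline{E}$; $\varphi$ is nearly convex if $\mathrm{epi}\,\varphi=\{(x,\alpha)\in\mathbb{R}^n\times\mathbb{R}\mid\alpha\ge\varphi(x)\}$ is nearly convex. The relative interior is $\mathrm{ri}\,D=\{a\in D\mid \exists\delta>0,\ B(a;\delta)\cap\mathrm{aff}\,D\subset D\}$. For $\varepsilon\ge0$ and $\bar x\in\mathrm{dom}\,\varphi$, $\partial_\varepsilon\varphi(\bar x)=\{\xi\in\mathbb{R}^n\mid \langle\xi,x-\bar x\rangle-\varepsilon\le\varphi(x)-\varphi(\bar x)\ \forall x\in\mathbb{R}^n\}$, and $\partial\varphi(\bar x)=\partial_0\varphi(\bar x)$. *)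

theory Defs
  imports "HOL-Analysis.Analysis" "HOL-Library.Extended_Real"
begin

definition edom :: "('a \<Rightarrow> ereal) \<Rightarrow> 'a set" where
  "edom \<phi> = {x. \<phi> x < \<infinity>}"

definition proper_fun :: "('a \<Rightarrow> ereal) \<Rightarrow> bool" where
  "proper_fun \<phi> \<longleftrightarrow> edom \<phi> \<noteq> {} \<and> (\<forall>x. \<phi> x > -\<infinity>)"

definition epi :: "('a \<Rightarrow> ereal) \<Rightarrow> ('a \<times> real) set" where
  "epi \<phi> = {(x, \<alpha>). ereal \<alpha> \<ge> \<phi> x}"

definition nearly_convex_set :: "'a::real_normed_vector set \<Rightarrow> bool" where
  "nearly_convex_set D \<longleftrightarrow> (\<exists>E. convex E \<and> E \<subseteq> D \<and> D \<subseteq> closure E)"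

definition nearly_convex_fun :: "('a::real_normed_vector \<Rightarrow> ereal) \<Rightarrow> bool" where
  "nearly_convex_fun \<phi> \<longleftrightarrow> nearly_convex_set (epi \<phi>)"

definition eps_subdiff :: "('a::real_inner \<Rightarrow> ereal) \<Rightarrow> real \<Rightarrow> 'a \<Rightarrow> 'a set" where
  "eps_subdiff \<phi> \<epsilon> xb =
     {\<xi>. \<forall>x. ereal (inner \<xi> (x - xb) - \<epsilon>) \<le> \<phi> x - \<phi> xb}"

definition subdiff :: "('a::real_inner \<Rightarrow> ereal) \<Rightarrow> 'a \<Rightarrow> 'a set" where
  "subdiff \<phi> xb = eps_subdiff \<phi> 0 xb"

end

theory Submission
  imports Defs
begin

text \<open>
  The epigraph of \<open>\<phi>\<close> lies between a convex set \<open>E\<close> and its closure. The graph point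
  \<open>(xb, \<phi> xb)\<close> is in \<open>closure E\<close> but not in \<open>rel_interior E\<close>, since nothing below it
  belongs to the epigraph, so \<open>E\<close> has a supporting hyperplane there. Because \<open>xb\<close> lies in the
  relative interior of the domain, this hyperplane cannot be vertical, and its normal, scaled
  to the form \<open>(-\<xi>, 1)\<close>, gives a subgradient \<open>\<xi>\<close>, which lies in every \<open>\<epsilon>\<close>-subdifferential.
  Closedness and convexity hold because \<open>eps_subdiff \<phi> \<epsilon> xb\<close> is an intersection of closed
  half-spaces.
\<close>

lemma rel_interior_prolong:
  fixes S :: "'a::real_normed_vector set"
  assumes "x \<in> rel_interior S" and "y \<in> affine hull S"
  obtains t where "t > 0" and "x + t *\<^sub>R (x - y) \<in> S"
proof -
  obtain e where e: "e > 0" "ball x e \<inter> affine hull S \<subseteq> S"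
    using assms(1) by (auto simp: mem_rel_interior_ball)
  have d: "norm (x - y) < 2 * (norm (x - y) + 1)" "2 * (norm (x - y) + 1) > 0"
    by (auto intro: add_nonneg_pos)
  define t where "t = e / (2 * (norm (x - y) + 1))"
  have t: "t > 0" using e(1) d(2) by (simp add: t_def)
  have "x \<in> affine hull S"
    using hull_inc[OF subsetD[OF rel_interior_subset assms(1)]] .
  then have "(1 + t) *\<^sub>R x + (- t) *\<^sub>R y \<in> affine hull S"
    by (intro mem_affine affine_affine_hull assms(2)) auto
  moreover have "(1 + t) *\<^sub>R x + (- t) *\<^sub>R y = x + t *\<^sub>R (x - y)"
    by (simp add: algebra_simps)
  ultimately have "x + t *\<^sub>R (x - y) \<in> affine hull S" by simp
  moreover have "dist x (x + t *\<^sub>R (x - y)) < e"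
  proof -
    have "dist x (x + t *\<^sub>R (x - y)) = t * norm (x - y)"
      using t by (simp add: dist_norm)
    also have "\<dots> < t * (2 * (norm (x - y) + 1))"
      using t d(1) by simp
    also have "\<dots> = e" using d(2) by (simp add: t_def)
    finally show ?thesis .
  qed
  ultimately show thesis using that t e(2) by auto
qed

lemma rel_interior_min_inner_eq:
  fixes S :: "'a::real_inner set"
  assumes "x \<in> rel_interior S" and min: "\<And>z. z \<in> S \<Longrightarrow> u \<bullet> x \<le> u \<bullet> z" and "y \<in> S"
  shows "u \<bullet> y = u \<bullet> x"
proof -
  obtain t where t: "t > 0" "x + t *\<^sub>R (x - y) \<in> S"
    using rel_interior_prolong[OF assms(1)] hull_inc[OF \<open>y \<in> S\<close>] by blast
  have "u \<bullet> x \<le> u \<bullet> x + t * (u \<bullet> (x - y))"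
    using min[OF t(2)] by (simp add: inner_add_right)
  then have "u \<bullet> y \<le> u \<bullet> x" using t(1) by (simp add: zero_le_mult_iff inner_diff_right)
  with min[OF \<open>y \<in> S\<close>] show ?thesis by simp
qed

lemma proper_fun_edom_real:
  assumes "proper_fun \<phi>" and "x \<in> edom \<phi>"
  shows "\<phi> x = ereal (real_of_ereal (\<phi> x))"
  using assms unfolding proper_fun_def edom_def by (cases "\<phi> x") auto

lemma mem_eps_subdiff_iff:
  assumes "proper_fun \<phi>" and "xb \<in> edom \<phi>"
  shows "\<xi> \<in> eps_subdiff \<phi> e xb \<longleftrightarrow>
    (\<forall>x\<in>edom \<phi>. \<xi> \<bullet> (x - xb) - e \<le> real_of_ereal (\<phi> x) - real_of_ereal (\<phi> xb))"
proof -
  obtain r where r: "\<phi> xb = ereal r"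
    using proper_fun_edom_real[OF assms] by blast
  have "ereal (\<xi> \<bullet> (x - xb) - e) \<le> \<phi> x - \<phi> xb \<longleftrightarrow>
     (x \<in> edom \<phi> \<longrightarrow> \<xi> \<bullet> (x - xb) - e \<le> real_of_ereal (\<phi> x) - r)" for x
    using assms(1) r unfolding proper_fun_def edom_def by (cases "\<phi> x") auto
  then show ?thesis unfolding eps_subdiff_def r by auto
qed

lemma eps_subdiff_eq_INT_halfspaces:
  assumes "proper_fun \<phi>" and "xb \<in> edom \<phi>"
  shows "eps_subdiff \<phi> e xb =
    (\<Inter>x\<in>edom \<phi>. {\<xi>. (x - xb) \<bullet> \<xi> \<le> real_of_ereal (\<phi> x) - real_of_ereal (\<phi> xb) + e})"
  using mem_eps_subdiff_iff[OF assms] by (auto simp: inner_commute diff_le_eq)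

lemma closed_eps_subdiff:
  assumes "proper_fun \<phi>" and "xb \<in> edom \<phi>"
  shows "closed (eps_subdiff \<phi> e xb)"
  unfolding eps_subdiff_eq_INT_halfspaces[OF assms]
  by (intro closed_INT ballI closed_halfspace_le)

lemma convex_eps_subdiff:
  assumes "proper_fun \<phi>" and "xb \<in> edom \<phi>"
  shows "convex (eps_subdiff \<phi> e xb)"
  unfolding eps_subdiff_eq_INT_halfspaces[OF assms]
  by (intro convex_INT ballI convex_halfspace_le)

lemma eps_subdiff_mono:
  assumes "e \<le> e'"
  shows "eps_subdiff \<phi> e xb \<subseteq> eps_subdiff \<phi> e' xb"
  unfolding eps_subdiff_def
proof (intro subsetI CollectI allI, elim CollectE)
  fix \<xi> x assume "\<forall>x. ereal (\<xi> \<bullet> (x - xb) - e) \<le> \<phi> x - \<phi> xb"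
  moreover have "ereal (\<xi> \<bullet> (x - xb) - e') \<le> ereal (\<xi> \<bullet> (x - xb) - e)" using assms by simp
  ultimately show "ereal (\<xi> \<bullet> (x - xb) - e') \<le> \<phi> x - \<phi> xb" by (meson order_trans)
qed

lemma subdiff_eq_INT_eps_subdiff:
  assumes "proper_fun \<phi>" and "xb \<in> edom \<phi>"
  shows "subdiff \<phi> xb = (\<Inter>e\<in>{e. e > 0}. eps_subdiff \<phi> e xb)"
proof
  show "subdiff \<phi> xb \<subseteq> (\<Inter>e\<in>{e. e > 0}. eps_subdiff \<phi> e xb)"
    unfolding subdiff_def by (auto intro: eps_subdiff_mono[of 0, THEN subsetD])
next
  show "(\<Inter>e\<in>{e. e > 0}. eps_subdiff \<phi> e xb) \<subseteq> subdiff \<phi> xb"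
  proof
    fix \<xi> assume \<xi>: "\<xi> \<in> (\<Inter>e\<in>{e. e > 0}. eps_subdiff \<phi> e xb)"
    have "\<xi> \<bullet> (x - xb) \<le> real_of_ereal (\<phi> x) - real_of_ereal (\<phi> xb)" if "x \<in> edom \<phi>" for x
    proof (rule field_le_epsilon)
      fix e :: real assume "e > 0"
      with \<xi> have "\<xi> \<in> eps_subdiff \<phi> e xb" by blast
      then have "\<xi> \<bullet> (x - xb) - e \<le> real_of_ereal (\<phi> x) - real_of_ereal (\<phi> xb)"
        using that unfolding mem_eps_subdiff_iff[OF assms] by blast
      then show "\<xi> \<bullet> (x - xb) \<le> real_of_ereal (\<phi> x) - real_of_ereal (\<phi> xb) + e" by simp
    qed
    then show "\<xi> \<in> subdiff \<phi> xb"
      unfolding subdiff_def mem_eps_subdiff_iff[OF assms] by simp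
  qed
qed

lemma mem_epi_iff:
  assumes "proper_fun \<phi>" and "x \<in> edom \<phi>"
  shows "(x, \<alpha>) \<in> epi \<phi> \<longleftrightarrow> real_of_ereal (\<phi> x) \<le> \<alpha>"
proof -
  obtain r where "\<phi> x = ereal r" using proper_fun_edom_real[OF assms] by blast
  then show ?thesis by (simp add: epi_def)
qed

lemma epi_imp_edom: "(x, \<alpha>) \<in> epi \<phi> \<Longrightarrow> x \<in> edom \<phi>"
  unfolding epi_def edom_def by (auto intro: le_less_trans)

lemma graph_point_not_rel_interior:
  fixes \<phi> :: "'a::euclidean_space \<Rightarrow> ereal"
  assumes "proper_fun \<phi>" and "x \<in> edom \<phi>" and "E \<subseteq> epi \<phi>" and "epi \<phi> \<subseteq> closure E"
  shows "(x, real_of_ereal (\<phi> x)) \<notin> rel_interior E" (is "?p \<notin> _")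
proof
  assume "?p \<in> rel_interior E"
  moreover have "?p + (0, 1) \<in> closure E"
    using assms(4) mem_epi_iff[OF assms(1,2)] by auto
  then have "?p + (0, 1) \<in> affine hull E" using closure_affine_hull by blast
  ultimately obtain t :: real where "t > 0" "?p + t *\<^sub>R (?p - (?p + (0, 1))) \<in> E"
    by (rule rel_interior_prolong)
  moreover have "?p + t *\<^sub>R (?p - (?p + (0, 1))) = (x, real_of_ereal (\<phi> x) - t)" by simp
  ultimately show False using assms(3) mem_epi_iff[OF assms(1,2)] by auto
qed

lemma subgradient_of_nonvertical_support:
  assumes "proper_fun \<phi>" and "xb \<in> edom \<phi>" and "s > 0"
    and "\<And>x. x \<in> edom \<phi> \<Longrightarrow>
      u \<bullet> xb + s * real_of_ereal (\<phi> xb) \<le> u \<bullet> x + s * real_of_ereal (\<phi> x)"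
  shows "(- (1 / s)) *\<^sub>R u \<in> subdiff \<phi> xb"
  unfolding subdiff_def mem_eps_subdiff_iff[OF assms(1,2)]
proof
  fix x assume "x \<in> edom \<phi>"
  then have "- (u \<bullet> (x - xb)) \<le> s * (real_of_ereal (\<phi> x) - real_of_ereal (\<phi> xb))"
    using assms(4) by (simp add: algebra_simps)
  then have "- (u \<bullet> (x - xb)) / s \<le> real_of_ereal (\<phi> x) - real_of_ereal (\<phi> xb)"
    unfolding pos_divide_le_eq[OF \<open>s > 0\<close>] by (simp add: mult.commute)
  then show "(- (1 / s)) *\<^sub>R u \<bullet> (x - xb) - 0 \<le> real_of_ereal (\<phi> x) - real_of_ereal (\<phi> xb)"
    by simp
qed

lemma subdiff_nonempty_rel_interior:
  fixes \<phi> :: "'a::euclidean_space \<Rightarrow> ereal"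
  assumes proper: "proper_fun \<phi>" and "nearly_convex_fun \<phi>"
    and xb: "xb \<in> rel_interior (edom \<phi>)"
  shows "subdiff \<phi> xb \<noteq> {}"
proof -
  define f where "f x = real_of_ereal (\<phi> x)" for x
  have xb_dom: "xb \<in> edom \<phi>" using xb rel_interior_subset by blast
  obtain E where E: "convex E" "E \<subseteq> epi \<phi>" "epi \<phi> \<subseteq> closure E"
    using \<open>nearly_convex_fun \<phi>\<close> unfolding nearly_convex_fun_def nearly_convex_set_def by blast
  define p where "p = (xb, f xb)"
  have p: "p \<in> closure E" and p_up: "p + (0, 1) \<in> closure E"
    using E(3) mem_epi_iff[OF proper xb_dom] by (auto simp: p_def f_def)
  obtain a where a: "\<And>y. y \<in> closure E \<Longrightarrow> a \<bullet> p \<le> a \<bullet> y"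
      "\<And>y. y \<in> rel_interior E \<Longrightarrow> a \<bullet> p < a \<bullet> y"
    using supporting_hyperplane_relative_frontier[OF E(1) p]
      graph_point_not_rel_interior[OF proper xb_dom E(2,3)] unfolding p_def f_def by metis
  obtain u s where us: "a = (u, s)" by (cases a)
  have "s \<ge> 0" using a(1)[OF p_up] by (simp add: us p_def algebra_simps)
  have support: "u \<bullet> xb + s * f xb \<le> u \<bullet> x + s * f x" if "x \<in> edom \<phi>" for x
    using a(1)[of "(x, f x)"] E(3) mem_epi_iff[OF proper that] by (auto simp: us p_def f_def)
  have "s \<noteq> 0"
  proof
    assume "s = 0"
    have "E \<noteq> {}" using p by auto
    then have "rel_interior E \<noteq> {}" using E(1) rel_interior_eq_empty by blast
    then obtain x \<alpha> where x: "(x, \<alpha>) \<in> rel_interior E" by auto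
    then have "(x, \<alpha>) \<in> epi \<phi>" using rel_interior_subset E(2) by blast
    then have "x \<in> edom \<phi>" by (rule epi_imp_edom)
    moreover have "u \<bullet> xb \<le> u \<bullet> z" if "z \<in> edom \<phi>" for z
      using support[OF that] \<open>s = 0\<close> by simp
    ultimately have "u \<bullet> x = u \<bullet> xb" using rel_interior_min_inner_eq[OF xb] by blast
    then show False using a(2)[OF x] \<open>s = 0\<close> by (simp add: us p_def)
  qed
  with \<open>s \<ge> 0\<close> have "s > 0" by simp
  have "(- (1 / s)) *\<^sub>R u \<in> subdiff \<phi> xb"
    by (rule subgradient_of_nonvertical_support[OF proper xb_dom \<open>s > 0\<close>])
      (use support in \<open>simp add: f_def\<close>)
  then show ?thesis by blast
qed

theorem mainTheorem2:
  fixes \<phi> :: "real^'n \<Rightarrow> ereal" and \<epsilon> :: real and xb :: "real^'n"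
  assumes "proper_fun \<phi>" and "nearly_convex_fun \<phi>" and "\<epsilon> \<ge> 0"
    and "xb \<in> rel_interior (edom \<phi>)"
  shows "eps_subdiff \<phi> \<epsilon> xb \<noteq> {} \<and> closed (eps_subdiff \<phi> \<epsilon> xb)
           \<and> convex (eps_subdiff \<phi> \<epsilon> xb)
         \<and> subdiff \<phi> xb = (\<Inter>e\<in>{e. e > 0}. eps_subdiff \<phi> e xb)"
proof -
  have xb_dom: "xb \<in> edom \<phi>" using assms(4) rel_interior_subset by blast
  have "subdiff \<phi> xb \<subseteq> eps_subdiff \<phi> \<epsilon> xb"
    unfolding subdiff_def using \<open>\<epsilon> \<ge> 0\<close> by (rule eps_subdiff_mono)
  then have "eps_subdiff \<phi> \<epsilon> xb \<noteq> {}"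
    using subdiff_nonempty_rel_interior[OF assms(1,2,4)] by blast
  then show ?thesis
    by (intro conjI closed_eps_subdiff[OF assms(1) xb_dom] convex_eps_subdiff[OF assms(1) xb_dom]
        subdiff_eq_INT_eps_subdiff[OF assms(1) xb_dom])
qed

end
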